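(* There is a deterministic algorithm which, given a set $P$ of $n$ elements and access to a query oracle for a poset $(P,\succ)$ of width at most $w$, finds the set of minimal elements of $(P,\succ)$ using at most $wn$ queries and total complexity $O(wn)$.
   Context: A poset $(P,\succ)$ consists of a set $P$ and an irreflexive, transitive relation $\succ$. Elements $a,b$ are incomparable if neither $a\succ b$ nor $b\succ a$; the width is the maximum size of a set of mutually incomparable elements. An element $a$ is minimal if there is no $b$ with $a\succ b$. A query oracle answers a query on $(x,y)$ by reporting whether $x\succ y$, $y\succ x$, or they are incomparable. Total complexity counts all computational operations (queries and basic operations). *)

theory Defs
  imports Main
begin

definition is_poset :: "'a set \<Rightarrow> ('a \<Rightarrow> 'a \<Rightarrow> bool) \<Rightarrow> bool" where
  "is_poset P gt \<longleftrightarrow> (\<forall>x\<in>P. \<not> gt x x) \<and>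
     (\<forall>x\<in>P. \<forall>y\<in>P. \<forall>z\<in>P. gt x y \<and> gt y z \<longrightarrow> gt x z)"

definition incomparable :: "('a \<Rightarrow> 'a \<Rightarrow> bool) \<Rightarrow> 'a \<Rightarrow> 'a \<Rightarrow> bool" where
  "incomparable gt a b \<longleftrightarrow> \<not> gt a b \<and> \<not> gt b a"

definition antichain :: "('a \<Rightarrow> 'a \<Rightarrow> bool) \<Rightarrow> 'a set \<Rightarrow> bool" where
  "antichain gt A \<longleftrightarrow> (\<forall>a\<in>A. \<forall>b\<in>A. a \<noteq> b \<longrightarrow> incomparable gt a b)"

definition width :: "'a set \<Rightarrow> ('a \<Rightarrow> 'a \<Rightarrow> bool) \<Rightarrow> nat" where
  "width P gt = Max {card A | A. A \<subseteq> P \<and> antichain gt A}"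

definition minimal_elements :: "'a set \<Rightarrow> ('a \<Rightarrow> 'a \<Rightarrow> bool) \<Rightarrow> 'a set" where
  "minimal_elements P gt = {a \<in> P. \<not> (\<exists>b\<in>P. gt a b)}"

text \<open>A program is a fixed finite list of instructions acting on list registers
  (indexed by nat) holding elements of the ground set.  Elements are opaque: the only way
  to learn about them is the query instruction Cmp, which asks the oracle about the heads
  of two registers.  Every executed instruction costs one unit (total complexity);
  every executed Cmp on two nonempty registers is one oracle query.\<close>

datatype instr =
    Move nat nat
  | Drop nat
  | IfEmpty nat nat
  | Cmp nat nat nat nat nat
  | Goto nat
  | Halt

type_synonym 'a config = "nat \<times> (nat \<Rightarrow> 'a list)"

definition halted :: "instr list \<Rightarrow> 'a config \<Rightarrow> bool" where
  "halted prog cfg \<longleftrightarrow> fst cfg \<ge> length prog \<or> prog ! fst cfg = Halt"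

fun exec_instr :: "('a \<Rightarrow> 'a \<Rightarrow> bool) \<Rightarrow> instr \<Rightarrow> 'a config \<Rightarrow> 'a config" where
  "exec_instr gt (Move i j) (pc, R) =
     (Suc pc, (case R i of [] \<Rightarrow> R | x # xs \<Rightarrow> R(i := xs, j := x # (R(i := xs)) j)))"
| "exec_instr gt (Drop i) (pc, R) = (Suc pc, R(i := tl (R i)))"
| "exec_instr gt (IfEmpty i l) (pc, R) = ((if R i = [] then l else Suc pc), R)"
| "exec_instr gt (Cmp i j l1 l2 l3) (pc, R) =
     ((if R i = [] \<or> R j = [] then l3
       else if gt (hd (R i)) (hd (R j)) then l1
       else if gt (hd (R j)) (hd (R i)) then l2
       else l3), R)"
| "exec_instr gt (Goto l) (pc, R) = (l, R)"
| "exec_instr gt Halt cfg = cfg"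

definition step :: "instr list \<Rightarrow> ('a \<Rightarrow> 'a \<Rightarrow> bool) \<Rightarrow> 'a config \<Rightarrow> 'a config" where
  "step prog gt cfg = (if halted prog cfg then cfg else exec_instr gt (prog ! fst cfg) cfg)"

definition exec :: "instr list \<Rightarrow> ('a \<Rightarrow> 'a \<Rightarrow> bool) \<Rightarrow> nat \<Rightarrow> 'a config \<Rightarrow> 'a config" where
  "exec prog gt t cfg = (step prog gt ^^ t) cfg"

definition is_query :: "instr list \<Rightarrow> 'a config \<Rightarrow> bool" where
  "is_query prog cfg \<longleftrightarrow> \<not> halted prog cfg \<and>
     (\<exists>i j l1 l2 l3. prog ! fst cfg = Cmp i j l1 l2 l3 \<and> snd cfg i \<noteq> [] \<and> snd cfg j \<noteq> [])"

definition queries :: "instr list \<Rightarrow> ('a \<Rightarrow> 'a \<Rightarrow> bool) \<Rightarrow> nat \<Rightarrow> 'a config \<Rightarrow> nat" where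
  "queries prog gt t cfg = card {s. s < t \<and> is_query prog (exec prog gt s cfg)}"

definition init_config :: "'a list \<Rightarrow> 'a config" where
  "init_config xs = (0, (\<lambda>_. [])(0 := xs))"

definition output_of :: "'a config \<Rightarrow> 'a set" where
  "output_of cfg = set (snd cfg 1)"

end

theory Submission
  imports Defs
begin

text \<open>The algorithm processes the elements one at a time, maintaining the list of minimal
  elements of the part processed so far.  These form an antichain, so there are at most w of
  them.  A new element x is compared with each of them: once some m with x above m is found,
  x is discarded and the list is unchanged; otherwise every m above x is removed and x is
  appended.  Hence each element costs at most w queries and O(w) instructions, while
  transitivity guarantees that the maintained list is exactly the set of minimal elements.\<close>

lemma is_poset_asymp_on: "is_poset P gt \<Longrightarrow> asymp_on P gt"
  unfolding is_poset_def asymp_on_def by blast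

lemma is_poset_transp_on: "is_poset P gt \<Longrightarrow> transp_on P gt"
  unfolding is_poset_def transp_on_def by blast

lemma is_poset_subset: "is_poset P gt \<Longrightarrow> D \<subseteq> P \<Longrightarrow> is_poset D gt"
  unfolding is_poset_def by blast

lemma minimal_element_below:
  assumes "is_poset D gt" and "finite D" and "d \<in> D"
  obtains m where "m \<in> minimal_elements D gt" and "m = d \<or> gt d m"
proof -
  obtain m where m: "m \<in> D" "m = d \<or> gt d m" and no_below: "\<forall>y\<in>D. gt m y \<longrightarrow> \<not> (y = d \<or> gt d y)"
    using Finite_Set.bex_max_element_with_property[OF \<open>finite D\<close> is_poset_asymp_on is_poset_transp_on,
        of gt "\<lambda>y. y = d \<or> gt d y"] assms by blast
  have "m \<in> minimal_elements D gt"
    using m no_below assms(1,3) unfolding minimal_elements_def is_poset_def by blast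
  with m show thesis using that by blast
qed

lemma minimal_elements_insert:
  assumes po: "is_poset (insert x D) gt" and "finite D" and "x \<notin> D"
  defines "M \<equiv> minimal_elements D gt"
  shows "minimal_elements (insert x D) gt =
    (if \<exists>m\<in>M. gt x m then M else insert x {m \<in> M. \<not> gt m x})"
proof -
  have irrefl: "\<not> gt y y" if "y \<in> insert x D" for y
    using po that unfolding is_poset_def by blast
  have trans: "gt a c" if "gt a b" "gt b c" "a \<in> insert x D" "b \<in> insert x D" "c \<in> insert x D" for a b c
    using po that unfolding is_poset_def by blast
  show ?thesis
  proof (cases "\<exists>m\<in>M. gt x m")
    case True
    then obtain m where "m \<in> M" "gt x m" by blast
    then have "gt x' m" if "x' \<in> insert x D" "x' = x \<or> gt x' x" for x'
      using \<open>m \<in> M\<close> that trans[of x' x m] unfolding M_def minimal_elements_def by auto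
    then have "minimal_elements (insert x D) gt = M"
      using \<open>m \<in> M\<close> \<open>x \<notin> D\<close> unfolding M_def minimal_elements_def by auto
    with True show ?thesis by simp
  next
    case False
    have "\<not> gt x d" if "d \<in> D" for d
    proof
      assume "gt x d"
      obtain m where "m \<in> M" and "m = d \<or> gt d m"
        using minimal_element_below[OF is_poset_subset[OF po] \<open>finite D\<close> \<open>d \<in> D\<close>] M_def by blast
      with \<open>gt x d\<close> False that trans[of x d m] show False
        unfolding M_def minimal_elements_def by auto
    qed
    with False irrefl[of x] show ?thesis
      unfolding M_def minimal_elements_def by auto
  qed
qed

lemma antichain_minimal_elements: "antichain gt (minimal_elements D gt)"
  unfolding antichain_def incomparable_def minimal_elements_def by auto

lemma card_le_width: "finite P \<Longrightarrow> A \<subseteq> P \<Longrightarrow> antichain gt A \<Longrightarrow> card A \<le> width P gt"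
  unfolding width_def by (rule Max_ge) (auto intro: finite_subset[of _ "card ` Pow P"])

lemma width_pos: "finite P \<Longrightarrow> x \<in> P \<Longrightarrow> 1 \<le> width P gt"
  using card_le_width[of P "{x}" gt] by (simp add: antichain_def)

lemma length_minima_le_width:
  assumes "finite P" and "D \<subseteq> P" and "distinct M" and "set M = minimal_elements D gt"
  shows "length M \<le> width P gt"
proof -
  have "set M \<subseteq> P"
    using assms(2,4) unfolding minimal_elements_def by auto
  then have "card (set M) \<le> width P gt"
    using card_le_width[OF assms(1)] antichain_minimal_elements[of gt D] assms(4) by simp
  with assms(3) show ?thesis by (simp add: distinct_card)
qed

text \<open>The scan performed by the program below: acc collects, in reverse order, the minima
  found incomparable to x.\<close>
fun update_minima :: "('a \<Rightarrow> 'a \<Rightarrow> bool) \<Rightarrow> 'a \<Rightarrow> 'a list \<Rightarrow> 'a list \<Rightarrow> 'a list" where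
  "update_minima gt x [] acc = rev acc @ [x]"
| "update_minima gt x (m # ms) acc =
     (if gt x m then rev acc @ m # ms
      else if gt m x then update_minima gt x ms acc
      else update_minima gt x ms (m # acc))"

lemma distinct_update_minima:
  "distinct (ms @ acc) \<Longrightarrow> x \<notin> set ms \<union> set acc \<Longrightarrow> distinct (update_minima gt x ms acc)"
  by (induction ms arbitrary: acc) auto

lemma set_update_minima:
  assumes po: "is_poset P gt" and "x \<in> P"
  shows "set ms \<union> set acc \<subseteq> P \<Longrightarrow> antichain gt (set ms \<union> set acc) \<Longrightarrow> \<forall>a\<in>set acc. \<not> gt a x \<Longrightarrow>
    set (update_minima gt x ms acc) =
      (if \<exists>m\<in>set ms. gt x m then set ms \<union> set acc else insert x {m \<in> set ms \<union> set acc. \<not> gt m x})"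
proof (induction ms arbitrary: acc)
  case (Cons m ms)
  have sub: "set ms \<union> set acc \<subseteq> P" "antichain gt (set ms \<union> set acc)"
    using Cons.prems(1,2) unfolding antichain_def by auto
  consider "gt x m" | "\<not> gt x m" "gt m x" | "\<not> gt x m" "\<not> gt m x" by blast
  then show ?case
  proof cases
    case 1
    then show ?thesis by auto
  next
    case 2
    have "\<not> gt x m'" if "m' \<in> set ms" for m'
    proof
      assume "gt x m'"
      moreover have "m \<in> P" "m' \<in> P"
        using Cons.prems(1) that by auto
      ultimately have "gt m m'"
        using 2 po \<open>x \<in> P\<close> unfolding is_poset_def by blast
      moreover have "m \<noteq> m'"
        using \<open>gt m m'\<close> \<open>m \<in> P\<close> po unfolding is_poset_def by blast
      ultimately show False
        using Cons.prems(2) that unfolding antichain_def incomparable_def by auto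
    qed
    with 2 Cons.IH[OF sub Cons.prems(3)] show ?thesis by auto
  next
    case 3
    have "set ms \<union> set (m # acc) = set (m # ms) \<union> set acc" by auto
    with 3 Cons.prems Cons.IH[of "m # acc"] show ?thesis by auto
  qed
qed auto

lemma set_update_minima_minimal_elements:
  assumes "is_poset (insert x D) gt" and "finite D" and "x \<notin> D" and "set M = minimal_elements D gt"
  shows "set (update_minima gt x M []) = minimal_elements (insert x D) gt"
proof -
  have "set M \<subseteq> insert x D"
    using assms(4) unfolding minimal_elements_def by auto
  then show ?thesis
    using set_update_minima[OF assms(1), of x M "[]"] minimal_elements_insert[OF assms(1-3)]
      antichain_minimal_elements[of gt D] assms(4)
    by simp
qed

lemma exec_add: "exec prog gt (t1 + t2) c = exec prog gt t2 (exec prog gt t1 c)"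
  by (simp add: exec_def funpow_add add.commute[of t1])

lemma queries_add:
  "queries prog gt (t1 + t2) c = queries prog gt t1 c + queries prog gt t2 (exec prog gt t1 c)"
proof -
  let ?S = "\<lambda>t c. {s. s < t \<and> is_query prog (exec prog gt s c)}"
  have split: "?S (t1 + t2) c = ?S t1 c \<union> (+) t1 ` ?S t2 (exec prog gt t1 c)"
  proof (intro set_eqI iffI)
    fix s assume "s \<in> ?S (t1 + t2) c"
    then show "s \<in> ?S t1 c \<union> (+) t1 ` ?S t2 (exec prog gt t1 c)"
      by (cases "s < t1") (auto simp: exec_add[symmetric] image_iff intro!: exI[of _ "s - t1"])
  qed (auto simp: exec_add[symmetric])
  have "card (?S t1 c \<union> (+) t1 ` ?S t2 (exec prog gt t1 c)) = card (?S t1 c) + card (?S t2 (exec prog gt t1 c))"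
    by (subst card_Un_disjoint) (auto simp: card_image)
  then show ?thesis
    unfolding queries_def split .
qed

definition runs :: "instr list \<Rightarrow> ('a \<Rightarrow> 'a \<Rightarrow> bool) \<Rightarrow> 'a config \<Rightarrow> nat \<Rightarrow> nat \<Rightarrow> 'a config \<Rightarrow> bool" where
  "runs prog gt c T Q c' \<longleftrightarrow> (\<exists>t\<le>T. exec prog gt t c = c' \<and> queries prog gt t c \<le> Q)"

lemma runs_trans [trans]:
  assumes "runs prog gt c1 T1 Q1 c2" and "runs prog gt c2 T2 Q2 c3"
  shows "runs prog gt c1 (T1 + T2) (Q1 + Q2) c3"
proof -
  from assms obtain t1 t2 where "t1 \<le> T1" "exec prog gt t1 c1 = c2" "queries prog gt t1 c1 \<le> Q1"
    and "t2 \<le> T2" "exec prog gt t2 c2 = c3" "queries prog gt t2 c2 \<le> Q2"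
    unfolding runs_def by blast
  then show ?thesis
    unfolding runs_def by (intro exI[of _ "t1 + t2"]) (auto simp: exec_add queries_add)
qed

lemma runs_mono: "runs prog gt c T Q c' \<Longrightarrow> T \<le> T' \<Longrightarrow> Q \<le> Q' \<Longrightarrow> runs prog gt c T' Q' c'"
  unfolding runs_def using le_trans by blast

lemma runs_stepI:
  assumes "step prog gt c = c'" and "is_query prog c \<Longrightarrow> 1 \<le> q"
  shows "runs prog gt c 1 q c'"
proof -
  have "{s. s < 1 \<and> is_query prog (exec prog gt s c)} = (if is_query prog c then {0} else {})"
    by (auto simp: exec_def)
  then have "queries prog gt 1 c \<le> q"
    unfolding queries_def using assms(2) by simp
  then show ?thesis
    unfolding runs_def using assms(1) by (intro exI[of _ 1]) (simp add: exec_def)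
qed

text \<open>Register 0 holds the unprocessed input, whose head x is the element being inserted;
  register 1 the minimal elements not yet compared with x; register 2 those already compared
  with x and incomparable to it, in reverse order.  After the scan register 2 is moved back.\<close>
definition minima_prog :: "instr list" where
  "minima_prog = [IfEmpty 0 13, IfEmpty 1 9, Cmp 0 1 7 5 3, Move 1 2, Goto 1, Drop 1, Goto 1,
     Drop 0, Goto 10, Move 0 1, IfEmpty 2 0, Move 2 1, Goto 10, Halt]"

lemmas minima_prog_step = step_def halted_def is_query_def minima_prog_def

definition regs :: "'a list \<Rightarrow> 'a list \<Rightarrow> 'a list \<Rightarrow> nat \<Rightarrow> 'a list" where
  "regs a b c = (\<lambda>_. [])(0 := a, 1 := b, 2 := c)"

lemma regs_simps [simp]:
  "regs a b c 0 = a" "regs a b c (Suc 0) = b" "regs a b c 2 = c"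
  "(regs a b c)(0 := a') = regs a' b c"
  "(regs a b c)(Suc 0 := b') = regs a b' c"
  "(regs a b c)(2 := c') = regs a b c'"
  by (auto simp: regs_def fun_eq_iff)

lemma runs_restore:
  "runs minima_prog gt (10, regs a ms acc) (3 * length acc + 1) 0 (0, regs a (rev acc @ ms) [])"
proof (induction acc arbitrary: ms)
  case Nil
  have "runs minima_prog gt (10, regs a ms []) 1 0 (0, regs a ms [])"
    by (rule runs_stepI) (simp_all add: minima_prog_step)
  then show ?case by simp
next
  case (Cons y acc)
  have "runs minima_prog gt (10, regs a ms (y # acc)) 1 0 (11, regs a ms (y # acc))"
    by (rule runs_stepI) (simp_all add: minima_prog_step)
  also have "runs minima_prog gt ... 1 0 (12, regs a (y # ms) acc)"
    by (rule runs_stepI) (simp_all add: minima_prog_step)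
  also have "runs minima_prog gt ... 1 0 (10, regs a (y # ms) acc)"
    by (rule runs_stepI) (simp_all add: minima_prog_step)
  also have "runs minima_prog gt ... (3 * length acc + 1) 0 (0, regs a (rev (y # acc) @ ms) [])"
    using Cons.IH by simp
  finally show ?case by (rule runs_mono) simp_all
qed

lemma runs_update_minima:
  "runs minima_prog gt (1, regs (x # rest) ms acc) (7 * length ms + 3 * length acc + 3) (length ms)
     (0, regs rest (update_minima gt x ms acc) [])"
proof (induction ms arbitrary: acc)
  case Nil
  have "runs minima_prog gt (1, regs (x # rest) [] acc) 1 0 (9, regs (x # rest) [] acc)"
    by (rule runs_stepI) (simp_all add: minima_prog_step)
  also have "runs minima_prog gt ... 1 0 (10, regs rest [x] acc)"
    by (rule runs_stepI) (simp_all add: minima_prog_step)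
  also have "runs minima_prog gt ... (3 * length acc + 1) 0 (0, regs rest (update_minima gt x [] acc) [])"
    using runs_restore by simp
  finally show ?case by (rule runs_mono) simp_all
next
  case (Cons m ms)
  let ?R = "regs (x # rest) (m # ms) acc"
  have compare: "runs minima_prog gt (1, ?R) 1 0 (2, ?R)"
    by (rule runs_stepI) (simp_all add: minima_prog_step)
  consider "gt x m" | "\<not> gt x m" "gt m x" | "\<not> gt x m" "\<not> gt m x" by blast
  then show ?case
  proof cases
    case 1
    note compare
    also have "runs minima_prog gt (2, ?R) 1 1 (7, ?R)"
      by (rule runs_stepI) (simp_all add: 1 minima_prog_step)
    also have "runs minima_prog gt ... 1 0 (8, regs rest (m # ms) acc)"
      by (rule runs_stepI) (simp_all add: minima_prog_step)
    also have "runs minima_prog gt ... 1 0 (10, regs rest (m # ms) acc)"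
      by (rule runs_stepI) (simp_all add: minima_prog_step)
    also have "runs minima_prog gt ... (3 * length acc + 1) 0
        (0, regs rest (update_minima gt x (m # ms) acc) [])"
      using runs_restore 1 by simp
    finally show ?thesis by (rule runs_mono) simp_all
  next
    case 2
    note compare
    also have "runs minima_prog gt (2, ?R) 1 1 (5, ?R)"
      by (rule runs_stepI) (simp_all add: 2 minima_prog_step)
    also have "runs minima_prog gt ... 1 0 (6, regs (x # rest) ms acc)"
      by (rule runs_stepI) (simp_all add: minima_prog_step)
    also have "runs minima_prog gt ... 1 0 (1, regs (x # rest) ms acc)"
      by (rule runs_stepI) (simp_all add: minima_prog_step)
    also have "runs minima_prog gt ... (7 * length ms + 3 * length acc + 3) (length ms)
        (0, regs rest (update_minima gt x (m # ms) acc) [])"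
      using Cons.IH 2 by simp
    finally show ?thesis by (rule runs_mono) simp_all
  next
    case 3
    note compare
    also have "runs minima_prog gt (2, ?R) 1 1 (3, ?R)"
      by (rule runs_stepI) (simp_all add: 3 minima_prog_step)
    also have "runs minima_prog gt ... 1 0 (4, regs (x # rest) ms (m # acc))"
      by (rule runs_stepI) (simp_all add: minima_prog_step)
    also have "runs minima_prog gt ... 1 0 (1, regs (x # rest) ms (m # acc))"
      by (rule runs_stepI) (simp_all add: minima_prog_step)
    also have "runs minima_prog gt ... (7 * length ms + 3 * length (m # acc) + 3) (length ms)
        (0, regs rest (update_minima gt x (m # ms) acc) [])"
      using Cons.IH[of "m # acc"] 3 by simp
    finally show ?thesis by (rule runs_mono) simp_all
  qed
qed

lemma runs_minima_prog_loop:
  assumes po: "is_poset P gt" and fin: "finite P" and width: "width P gt \<le> w"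
  shows "distinct ys \<Longrightarrow> set ys \<subseteq> P \<Longrightarrow> D \<subseteq> P \<Longrightarrow> set ys \<inter> D = {} \<Longrightarrow>
    distinct M \<Longrightarrow> set M = minimal_elements D gt \<Longrightarrow>
    \<exists>M'. set M' = minimal_elements (D \<union> set ys) gt \<and>
      runs minima_prog gt (0, regs ys M []) ((7 * w + 4) * length ys + 1) (w * length ys) (13, regs [] M' [])"
proof (induction ys arbitrary: D M)
  case Nil
  have "runs minima_prog gt (0, regs [] M []) 1 0 (13, regs [] M [])"
    by (rule runs_stepI) (simp_all add: minima_prog_step)
  then show ?case
    using Nil.prems(6) by (intro exI[of _ M]) simp
next
  case (Cons x ys)
  let ?M = "update_minima gt x M []"
  have "length M \<le> w"
    using length_minima_le_width[OF fin Cons.prems(3,5,6)] width by simp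
  have "x \<in> P" "x \<notin> D"
    using Cons.prems(2,4) by auto
  have "finite D"
    using finite_subset[OF Cons.prems(3) fin] .
  have "x \<notin> set M"
    using Cons.prems(6) \<open>x \<notin> D\<close> unfolding minimal_elements_def by blast
  have "is_poset (insert x D) gt"
    using is_poset_subset[OF po] \<open>x \<in> P\<close> Cons.prems(3) by simp
  have "distinct ys" "set ys \<subseteq> P" "insert x D \<subseteq> P" "set ys \<inter> insert x D = {}"
    using Cons.prems(1-4) \<open>x \<in> P\<close> by auto
  moreover have "distinct ?M"
    using distinct_update_minima[of M "[]" x gt] Cons.prems(5) \<open>x \<notin> set M\<close> by simp
  moreover have "set ?M = minimal_elements (insert x D) gt"
    by (rule set_update_minima_minimal_elements[OF \<open>is_poset (insert x D) gt\<close> \<open>finite D\<close> \<open>x \<notin> D\<close> Cons.prems(6)])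
  ultimately obtain M' where M': "set M' = minimal_elements (insert x D \<union> set ys) gt"
    and run: "runs minima_prog gt (0, regs ys ?M []) ((7 * w + 4) * length ys + 1) (w * length ys)
      (13, regs [] M' [])"
    by (elim Cons.IH[elim_format] exE conjE)
  have "runs minima_prog gt (0, regs (x # ys) M []) 1 0 (1, regs (x # ys) M [])"
    by (rule runs_stepI) (simp_all add: minima_prog_step)
  also have "runs minima_prog gt ... (7 * length M + 3) (length M) (0, regs ys ?M [])"
    using runs_update_minima[of gt x ys M "[]"] by simp
  also note run
  finally have "runs minima_prog gt (0, regs (x # ys) M []) ((7 * w + 4) * length (x # ys) + 1)
      (w * length (x # ys)) (13, regs [] M' [])"
    by (rule runs_mono) (use \<open>length M \<le> w\<close> in \<open>simp_all add: algebra_simps\<close>)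
  with M' show ?case by (intro exI[of _ M']) simp
qed

lemma runs_minima_prog:
  assumes "distinct xs" and po: "is_poset (set xs) gt" and width: "width (set xs) gt \<le> w"
  obtains M where "set M = minimal_elements (set xs) gt"
    and "runs minima_prog gt (init_config xs) (11 * (w * length xs + 1)) (w * length xs)
      (13, regs [] M [])"
proof -
  have "init_config xs = (0, regs xs [] [])"
    by (auto simp: init_config_def regs_def fun_eq_iff)
  then obtain M where M: "set M = minimal_elements (set xs) gt"
    and run: "runs minima_prog gt (init_config xs) ((7 * w + 4) * length xs + 1) (w * length xs)
      (13, regs [] M [])"
    using runs_minima_prog_loop[OF po _ width \<open>distinct xs\<close>, of "{}" "[]"]
    by (auto simp: minimal_elements_def)
  have "(7 * w + 4) * length xs + 1 \<le> 11 * (w * length xs + 1)"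
  proof (cases xs)
    case (Cons x _)
    then have "1 \<le> w"
      using width_pos[of "set xs" x gt] width by simp
    then have "length xs \<le> w * length xs" by simp
    moreover have "(7 * w + 4) * length xs = 7 * (w * length xs) + 4 * length xs"
      and "11 * (w * length xs + 1) = 11 * (w * length xs) + 11"
      by (simp_all add: algebra_simps)
    ultimately show ?thesis by linarith
  qed simp
  with M run show thesis
    using that runs_mono by blast
qed

theorem theorem7:
  "\<exists>(prog :: instr list) (c :: nat).
     \<forall>(xs :: 'a list) (gt :: 'a \<Rightarrow> 'a \<Rightarrow> bool) (w :: nat).
       distinct xs \<and> is_poset (set xs) gt \<and> width (set xs) gt \<le> w \<longrightarrow>
       (\<exists>t. halted prog (exec prog gt t (init_config xs)) \<and>
            t \<le> c * (w * length xs + 1) \<and>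
            queries prog gt t (init_config xs) \<le> w * length xs \<and>
            output_of (exec prog gt t (init_config xs)) = minimal_elements (set xs) gt)"
proof (rule exI[of _ minima_prog], rule exI[of _ 11], intro allI impI, elim conjE)
  fix xs :: "'a list" and gt w
  assume "distinct xs" "is_poset (set xs) gt" "width (set xs) gt \<le> w"
  then obtain M where M: "set M = minimal_elements (set xs) gt"
    and "runs minima_prog gt (init_config xs) (11 * (w * length xs + 1)) (w * length xs)
      (13, regs [] M [])"
    by (rule runs_minima_prog)
  then obtain t where "t \<le> 11 * (w * length xs + 1)"
    and final: "exec minima_prog gt t (init_config xs) = (13, regs [] M [])"
    and "queries minima_prog gt t (init_config xs) \<le> w * length xs"
    unfolding runs_def by blast
  moreover have "halted minima_prog (13, regs [] M [])"
    by (simp add: halted_def minima_prog_def)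
  ultimately show "\<exists>t. halted minima_prog (exec minima_prog gt t (init_config xs)) \<and>
      t \<le> 11 * (w * length xs + 1) \<and> queries minima_prog gt t (init_config xs) \<le> w * length xs \<and>
      output_of (exec minima_prog gt t (init_config xs)) = minimal_elements (set xs) gt"
    using M by (intro exI[of _ t]) (simp add: output_of_def)
qed

end
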